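(* Consider the State Machine Replication protocol (described in the context) executed with fewer than $\lfloor n/3 \rfloor$ Byzantine processes and fewer than $\lceil n/6 \rceil - 1$ transient faults. Then for every pulse $Pulse_i$ with $i>1$, just before $Pulse_i$ every non-faulty process is in the state $\delta(s, \mathit{in}_{i-1})$, where $s$ is the state of a non-faulty process just before $Pulse_{i-1}$ and $\mathit{in}_{i-1}$ is the input value commonly decided in the iteration triggered by $Pulse_{i-1}$.
   Context: System model: $n$ processes in a synchronous, fully connected message-passing system with authenticated channels; Byzantine processes may deviate arbitrarily (including sending different messages to different processes). $M$ is a deterministic state machine with state set $Q$, input alphabet $\Sigma$ and transition function $\delta: Q\times\Sigma\to Q$ (states and inputs are encoded as elements of a totally ordered set, e.g. integers). Each process keeps a local variable input\_value (its current external input) and current\_state (its replica of the state of $M$). Execution is divided into iterations, each triggered by an external global pulse $Pulse$ and consisting of several synchronous rounds. In each iteration every process: (1) sets input\_value to the output of the Median-based Byzantine Agreement algorithm run with input input\_value; (2) sets current\_state to the output of the Median-based Byzantine Agreement algorithm run with input current\_state; (3) sets its replica state (the current\_state used in the next iteration) to $\delta(\text{current\_state}, \text{input\_value})$. Recurrent transient faults occur only at the beginning of a pulse: they arbitrarily corrupt the local state (state value or input) of a non-Byzantine process, which then follows the protocol. A process is non-faulty if it is not Byzantine and not currently corrupted by a transient fault. Median-based Byzantine Agreement algorithm with parameter $0 \le \alpha < \lceil n/6\rceil - 1$, run by a process with value $v$: (a) send $v$ to all processes; set $A[i]$ to the value received from $p_i$ ($\bot$ if none). (b) For each $i$, in parallel,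 run a WeakMVBA instance with input $A[i]$ and replace $A[i]$ by its decision, where WeakMVBA is a Byzantine agreement protocol such that all non-faulty processes decide the same value, and if all non-faulty processes have the same input $u$ they decide $u$ (otherwise the decision may be any value or the default $\bot$). (c) Remove $\bot$ entries to get a list of length $k$; let $m$ be a most frequent value (deterministic tie-breaking) with count $C[m]$; if $C[m]\ge \lfloor k/3\rfloor+1+\alpha$ output $m$, else output the median of the sorted list (the entry at position $\lfloor k/2\rfloor$; lower middle value for even $k$). *)

theory Defs
  imports Complex_Main
begin

definition defined_vals :: "(nat \<Rightarrow> 'v option) \<Rightarrow> nat \<Rightarrow> 'v list" where
  "defined_vals A n = map the (filter (\<lambda>x. x \<noteq> None) (map A [0..<n]))"

definition most_frequent :: "'v::linorder list \<Rightarrow> 'v" where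
  "most_frequent xs =
     (let c = Max (set (map (count_list xs) xs))
      in Min {x \<in> set xs. count_list xs x = c})"

definition mbba_out :: "nat \<Rightarrow> 'v::linorder list \<Rightarrow> 'v" where
  "mbba_out \<alpha> xs =
     (let k = length xs; m = most_frequent xs
      in if count_list xs m \<ge> k div 3 + 1 + \<alpha> then m else sort xs ! (k div 2))"

text \<open>Processes are 0..n-1. Pulses / iterations are indexed by i >= 1.
  Byz: the Byzantine processes. Tr i: the (non-Byzantine) processes hit by a transient
  fault at the beginning of Pulse_i.
  st i p   : replica state (current_state) of p just before Pulse_i;
  stc i p  : current_state of p at the start of iteration i (after possible corruption);
  inp i p  : input_value of p at the start of iteration i (external input, possibly corrupted);
  rS i p j / rI i p j : value p received from p_j in step (a) of the state / input BA run;
  dS i p j / dI i p j : decision of p in the WeakMVBA instance j of the state / input BA run.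
  Processes hit by a transient fault follow the protocol from the pulse on, so all
  non-Byzantine processes are correct participants of the WeakMVBA instances.\<close>
definition smr_execution ::
  "nat \<Rightarrow> nat \<Rightarrow> ('q::linorder \<Rightarrow> 'a::linorder \<Rightarrow> 'q) \<Rightarrow> 'q \<Rightarrow> nat set \<Rightarrow> (nat \<Rightarrow> nat set)
   \<Rightarrow> (nat \<Rightarrow> nat \<Rightarrow> 'q) \<Rightarrow> (nat \<Rightarrow> nat \<Rightarrow> 'q) \<Rightarrow> (nat \<Rightarrow> nat \<Rightarrow> 'a)
   \<Rightarrow> (nat \<Rightarrow> nat \<Rightarrow> nat \<Rightarrow> 'q option) \<Rightarrow> (nat \<Rightarrow> nat \<Rightarrow> nat \<Rightarrow> 'a option)
   \<Rightarrow> (nat \<Rightarrow> nat \<Rightarrow> nat \<Rightarrow> 'q option) \<Rightarrow> (nat \<Rightarrow> nat \<Rightarrow> nat \<Rightarrow> 'a option) \<Rightarrow> bool" where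
  "smr_execution n \<alpha> \<delta> q0 Byz Tr st stc inp rS rI dS dI \<longleftrightarrow>
     \<comment> \<open>all replicas start in the initial state of M\<close>
     (\<forall>p<n. p \<notin> Byz \<longrightarrow> st 1 p = q0) \<and>
     (\<forall>i\<ge>1.
        \<comment> \<open>transient faults only corrupt processes in Tr i\<close>
        (\<forall>p<n. p \<notin> Byz \<longrightarrow> p \<notin> Tr i \<longrightarrow> stc i p = st i p) \<and>
        \<comment> \<open>step (a): reliable authenticated synchronous channels from non-Byzantine senders\<close>
        (\<forall>p<n. \<forall>j<n. p \<notin> Byz \<longrightarrow> j \<notin> Byz \<longrightarrow>
            rS i p j = Some (stc i j) \<and> rI i p j = Some (inp i j)) \<and>
        \<comment> \<open>step (b): WeakMVBA agreement and validity for every instance j\<close>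
        (\<forall>j<n.
           (\<forall>p<n. \<forall>p'<n. p \<notin> Byz \<longrightarrow> p' \<notin> Byz \<longrightarrow> dS i p j = dS i p' j \<and> dI i p j = dI i p' j) \<and>
           (\<forall>u. (\<forall>p<n. p \<notin> Byz \<longrightarrow> rS i p j = u) \<longrightarrow> (\<forall>p<n. p \<notin> Byz \<longrightarrow> dS i p j = u)) \<and>
           (\<forall>u. (\<forall>p<n. p \<notin> Byz \<longrightarrow> rI i p j = u) \<longrightarrow> (\<forall>p<n. p \<notin> Byz \<longrightarrow> dI i p j = u))) \<and>
        \<comment> \<open>steps (1)-(3): new replica state\<close>
        (\<forall>p<n. p \<notin> Byz \<longrightarrow>
            st (Suc i) p = \<delta> (mbba_out \<alpha> (defined_vals (dS i p) n))
                                (mbba_out \<alpha> (defined_vals (dI i p) n))))"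

end

theory Submission
  imports Defs
begin

text \<open>With fewer than n/3 Byzantine and fewer than n/6 transiently corrupted processes,
  a strict majority of the n processes is correct and uncorrupted in every iteration.
  All non-Byzantine replicas hold the same state s (they start in q0 and every iteration
  applies \<delta> to outputs computed from WeakMVBA decisions, on which they agree), so by
  WeakMVBA validity a strict majority of the decided state entries equals s. A strict
  majority value is both the most frequent value and the median of a list, so the state
  agreement outputs s whichever branch of step (c) is taken.\<close>

lemma majority_indices_straddle:
  assumes "I \<subseteq> {..<k}" and "k < 2 * card I"
  shows "\<exists>i\<in>I. i \<le> k div 2" and "\<exists>j\<in>I. k div 2 \<le> j"
proof -
  have "\<not> I \<subseteq> {k div 2<..<k}"
    using card_mono[of "{k div 2<..<k}" I] assms(2) by auto
  then show "\<exists>i\<in>I. i \<le> k div 2"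
    using assms(1) by (auto simp: subset_eq not_less)
  have "\<not> I \<subseteq> {..<k div 2}"
    using card_mono[of "{..<k div 2}" I] assms(2) by auto
  then show "\<exists>j\<in>I. k div 2 \<le> j"
    by (auto simp: subset_eq not_less)
qed

lemma sorted_nth_middle_eq_majority:
  fixes ys :: "'a::linorder list"
  assumes "sorted ys" and "length ys < 2 * count_list ys s"
  shows "ys ! (length ys div 2) = s"
proof -
  let ?I = "{i. i < length ys \<and> ys ! i = s}"
  have "count_list ys s = card ?I"
    by (simp add: count_list_eq_length_filter length_filter_conv_card eq_commute)
  then obtain i j where "i \<in> ?I" "j \<in> ?I" "i \<le> length ys div 2" "length ys div 2 \<le> j"
    using majority_indices_straddle[of ?I "length ys"] assms(2) by auto
  then have "s \<le> ys ! (length ys div 2)" "ys ! (length ys div 2) \<le> s"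
    using sorted_nth_mono[OF assms(1)] by fastforce+
  then show ?thesis
    by simp
qed

lemma count_list_add_le_length:
  "x \<noteq> y \<Longrightarrow> count_list xs x + count_list xs y \<le> length xs"
  by (induction xs) auto

lemma most_frequent_eq_majority:
  fixes xs :: "'a::linorder list"
  assumes "length xs < 2 * count_list xs s"
  shows "most_frequent xs = s"
proof -
  have s_in: "s \<in> set xs"
    using assms count_notin by fastforce
  have less: "count_list xs x < count_list xs s" if "x \<noteq> s" for x
    using count_list_add_le_length[OF that, of xs] assms by linarith
  have le: "count_list xs x \<le> count_list xs s" for x
    using less by (cases "x = s") (auto simp: less_imp_le)
  have "Max (set (map (count_list xs) xs)) = count_list xs s"
    using s_in le by (intro Max_eqI) auto
  moreover have "{x \<in> set xs. count_list xs x = count_list xs s} = {s}"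
    using s_in less by force
  ultimately show ?thesis
    by (simp add: most_frequent_def)
qed

lemma mbba_out_eq_majority:
  fixes xs :: "'a::linorder list"
  assumes "length xs < 2 * count_list xs s"
  shows "mbba_out \<alpha> xs = s"
proof -
  have "count_list (sort xs) s = count_list xs s"
    by (simp add: count_list_eq_length_filter filter_sort)
  then have "sort xs ! (length xs div 2) = s"
    using sorted_nth_middle_eq_majority[of "sort xs" s] assms by simp
  then show ?thesis
    using most_frequent_eq_majority[OF assms] by (simp add: mbba_out_def Let_def)
qed

lemma length_defined_vals_le: "length (defined_vals A n) \<le> n"
  by (simp add: defined_vals_def length_filter_le[THEN order_trans])

lemma count_list_defined_vals:
  "count_list (defined_vals A n) v = card {i. i < n \<and> A i = Some v}"
proof -
  have "count_list (defined_vals A n) v = length (filter (\<lambda>i. A i = Some v) [0..<n])"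
    unfolding defined_vals_def count_list_eq_length_filter
    by (auto simp: filter_map comp_def intro!: arg_cong[where f = length] filter_cong)
  then show ?thesis
    by (auto simp: length_filter_conv_card intro!: arg_cong[where f = card])
qed

lemma defined_vals_cong:
  "(\<And>i. i < n \<Longrightarrow> A i = B i) \<Longrightarrow> defined_vals A n = defined_vals B n"
proof -
  assume "\<And>i. i < n \<Longrightarrow> A i = B i"
  then have eq: "map A [0..<n] = map B [0..<n]"
    by simp
  show ?thesis
    unfolding defined_vals_def eq ..
qed

lemma card_lessThan_diff_majority:
  assumes "finite B" "finite T" "2 * (card B + card T) < n"
  shows "n < 2 * card ({..<n} - B - T)"
proof -
  have "card {..<n} \<le> card (({..<n} - B - T) \<union> B \<union> T)"
    using assms(1,2) by (intro card_mono) auto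
  also have "\<dots> \<le> card ({..<n} - B - T) + card B + card T"
    by (meson card_Un_le add_right_mono order_trans)
  finally show ?thesis
    using assms(3) by simp
qed

lemma six_mult_less_of_less_ceiling:
  assumes "int t < \<lceil>real n / 6\<rceil>"
  shows "6 * t < n"
proof -
  have "real_of_int \<lceil>real n / 6\<rceil> < real n / 6 + 1"
    by linarith
  then have "real t < real n / 6"
    using assms by linarith
  then show ?thesis
    by linarith
qed

context
  fixes n \<alpha> :: nat and \<delta> :: "'q::linorder \<Rightarrow> 'a::linorder \<Rightarrow> 'q" and q0 :: 'q
    and Byz :: "nat set" and Tr :: "nat \<Rightarrow> nat set"
    and st stc :: "nat \<Rightarrow> nat \<Rightarrow> 'q" and inp :: "nat \<Rightarrow> nat \<Rightarrow> 'a"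
    and rS dS :: "nat \<Rightarrow> nat \<Rightarrow> nat \<Rightarrow> 'q option" and rI dI :: "nat \<Rightarrow> nat \<Rightarrow> nat \<Rightarrow> 'a option"
  assumes exec: "smr_execution n \<alpha> \<delta> q0 Byz Tr st stc inp rS rI dS dI"
begin

lemmas smr_iteration = exec[unfolded smr_execution_def, THEN conjunct2, THEN spec, THEN mp]

lemma smr_initial_state: "p < n \<Longrightarrow> p \<notin> Byz \<Longrightarrow> st 1 p = q0"
  using exec[unfolded smr_execution_def, THEN conjunct1] by blast

lemma smr_uncorrupted_state:
  "k \<ge> 1 \<Longrightarrow> p < n \<Longrightarrow> p \<notin> Byz \<Longrightarrow> p \<notin> Tr k \<Longrightarrow> stc k p = st k p"
  using smr_iteration[of k, THEN conjunct1] by blast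

lemma smr_state_received:
  "k \<ge> 1 \<Longrightarrow> p < n \<Longrightarrow> g < n \<Longrightarrow> p \<notin> Byz \<Longrightarrow> g \<notin> Byz \<Longrightarrow> rS k p g = Some (stc k g)"
  using smr_iteration[of k, THEN conjunct2, THEN conjunct1] by blast

lemma smr_agreement:
  assumes "k \<ge> 1" "g < n" "p < n" "p' < n" "p \<notin> Byz" "p' \<notin> Byz"
  shows "dS k p g = dS k p' g \<and> dI k p g = dI k p' g"
  using smr_iteration[of k, THEN conjunct2, THEN conjunct2, THEN conjunct1] assms by blast

lemma smr_state_validity:
  assumes "k \<ge> 1" "g < n" "\<forall>p<n. p \<notin> Byz \<longrightarrow> rS k p g = u" "p < n" "p \<notin> Byz"
  shows "dS k p g = u"
  using smr_iteration[of k, THEN conjunct2, THEN conjunct2, THEN conjunct1] assms by blast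

lemma smr_step:
  assumes "k \<ge> 1" "p < n" "p \<notin> Byz"
  shows "st (Suc k) p = \<delta> (mbba_out \<alpha> (defined_vals (dS k p) n))
                              (mbba_out \<alpha> (defined_vals (dI k p) n))"
  using smr_iteration[of k, THEN conjunct2, THEN conjunct2, THEN conjunct2] assms by blast

lemma smr_decisions_agree:
  assumes "k \<ge> 1" "p < n" "p' < n" "p \<notin> Byz" "p' \<notin> Byz"
  shows "defined_vals (dS k p) n = defined_vals (dS k p') n"
    and "defined_vals (dI k p) n = defined_vals (dI k p') n"
  using smr_agreement[OF assms(1) _ assms(2-5)] by (auto intro: defined_vals_cong)

lemma smr_replicas_agree:
  assumes "k \<ge> 1" "p < n" "p' < n" "p \<notin> Byz" "p' \<notin> Byz"
  shows "st k p = st k p'"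
proof (cases "k = 1")
  case True
  then show ?thesis
    using smr_initial_state assms by simp
next
  case False
  then obtain k' where "k = Suc k'" "k' \<ge> 1"
    using assms(1) by (cases k) auto
  then show ?thesis
    using smr_step[of k' p] smr_step[of k' p'] smr_decisions_agree[of k' p p'] assms by simp
qed

lemma smr_correct_state_decided:
  assumes "k \<ge> 1" "g \<in> {..<n} - Byz - Tr k"
    and "p < n" "p \<notin> Byz" "q < n" "q \<notin> Byz"
  shows "dS k p g = Some (st k q)"
proof (rule smr_state_validity)
  have "stc k g = st k q"
    using assms smr_uncorrupted_state smr_replicas_agree[of k g q] by auto
  then show "\<forall>p'<n. p' \<notin> Byz \<longrightarrow> rS k p' g = Some (st k q)"
    using assms smr_state_received by auto
qed (use assms in auto)

lemma smr_next_state: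
  assumes "k \<ge> 1" "n < 2 * card ({..<n} - Byz - Tr k)"
    and "p < n" "p \<notin> Byz" "q < n" "q \<notin> Byz" "r < n" "r \<notin> Byz"
  shows "st (Suc k) p = \<delta> (st k q) (mbba_out \<alpha> (defined_vals (dI k r) n))"
proof -
  let ?xs = "defined_vals (dS k p) n"
  have "card ({..<n} - Byz - Tr k) \<le> count_list ?xs (st k q)"
    unfolding count_list_defined_vals
    using smr_correct_state_decided[OF assms(1) _ assms(3-6)] by (intro card_mono) auto
  then have "length ?xs < 2 * count_list ?xs (st k q)"
    using length_defined_vals_le[of "dS k p" n] assms(2) by linarith
  then show ?thesis
    using smr_step[OF assms(1,3,4)] smr_decisions_agree(2)[OF assms(1,3,7,4,8)]
    by (simp add: mbba_out_eq_majority)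
qed

end

theorem lemma5:
  fixes \<delta> :: "'q::linorder \<Rightarrow> 'a::linorder \<Rightarrow> 'q"
    and n \<alpha> :: nat and Byz :: "nat set" and Tr :: "nat \<Rightarrow> nat set"
  assumes byz_sub: "Byz \<subseteq> {..<n}"
    and byz_card: "card Byz < n div 3"
    and tr_sub: "\<forall>i\<ge>1. Tr i \<subseteq> {..<n} - Byz"
    and tr_card: "\<forall>i\<ge>1. int (card (Tr i)) < \<lceil>real n / 6\<rceil> - 1"
    and alpha: "int \<alpha> < \<lceil>real n / 6\<rceil> - 1"
    and exec: "smr_execution n \<alpha> \<delta> q0 Byz Tr st stc inp rS rI dS dI"
  shows "\<forall>i>1. \<forall>p<n. \<forall>q<n. \<forall>r<n. p \<notin> Byz \<longrightarrow> q \<notin> Byz \<longrightarrow> r \<notin> Byz \<longrightarrow>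
           st i p = \<delta> (st (i - 1) q) (mbba_out \<alpha> (defined_vals (dI (i - 1) r) n))"
proof (intro allI impI)
  fix i p q r :: nat
  assume "1 < i"
    and procs: "p < n" "q < n" "r < n" "p \<notin> Byz" "q \<notin> Byz" "r \<notin> Byz"
  then obtain k where k: "i = Suc k" "k \<ge> 1"
    by (cases i) auto
  have "finite Byz"
    using byz_sub by (rule finite_subset) simp
  moreover have "finite (Tr k)"
    using tr_sub k(2) by (meson Diff_subset finite_lessThan finite_subset subset_trans)
  moreover have "6 * card (Tr k) < n"
    using tr_card k(2) by (intro six_mult_less_of_less_ceiling) fastforce
  moreover have "3 * card Byz < n"
    using byz_card by linarith
  ultimately have majority: "n < 2 * card ({..<n} - Byz - Tr k)"
    by (intro card_lessThan_diff_majority) auto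
  show "st i p = \<delta> (st (i - 1) q) (mbba_out \<alpha> (defined_vals (dI (i - 1) r) n))"
    using smr_next_state[OF exec k(2) majority procs(1,4,2,5,3,6)] k(1) by simp
qed

end
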